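(* Let $\alpha>0$ and $\beta,\gamma>1/2$, all different from $1$, satisfy $\frac{\alpha}{\alpha-1}=\frac{\beta}{\beta-1}+\frac{\gamma}{\gamma-1}$, and assume $\beta>\gamma$. Write $\eta'=\frac{\eta-1}{\eta}$. Then: (i) If $0<\frac{\alpha'}{\beta'}<1$, then either (Case 1) $\alpha,\beta,\gamma>1$, $\alpha<\gamma<\beta$, $\alpha\in(1,2)$ and $\beta,\gamma\in(1,\infty)$; or (Case 2) $\alpha,\beta,\gamma<1$, $\gamma<\beta<\alpha$, $\alpha\in[2/3,1)$ and $\beta,\gamma\in[1/2,1)$. (ii) If $0<\frac{\beta'}{\alpha'}<1$, then (Case 3) $\alpha,\beta>1$, $\gamma<1$, $\gamma<\beta<\alpha$, $\gamma\in[1/2,1)$, $\beta\in(1,2)$ and $\alpha\in(1,\infty)$. (iii) If $0<\frac{\gamma'}{\alpha'}<1$, then (Case 4) $\alpha,\gamma<1$, $\beta>1$, $\alpha<\gamma<\beta$, $\alpha\in(0,1)$, $\gamma\in[1/2,1)$ and $\beta\in(1,\infty)$. Moreover, Cases 1–4 cover all possible cases (i.e. every such triple $(\alpha,\beta,\gamma)$ falls into one of Cases 1–4). *)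

theory Defs
  imports Complex_Main
begin

definition prm :: "real \<Rightarrow> real" where
  "prm \<eta> = (\<eta> - 1) / \<eta>"

end

theory Submission
  imports Defs
begin

text \<open>Write x = \<alpha>', y = \<beta>', z = \<gamma>'. The hypothesis says exactly
  1/x = 1/y + 1/z, and t \<mapsto> t' = 1 - 1/t is increasing on (0, \<infinity>), mapping (1/2, \<infinity>) into
  (-1, 1) and 1/2, 2/3, 1, 2 to -1, -1/2, 0, 1/2. As |1/y|, |1/z| > 1, the signs of y and z
  (and, when they differ, of x) force bounds such as 1/x > 2, which give the four cases.
  The ratio conditions of (i)-(iii) are order relations among x, y, z and 0, so they too
  translate into order relations among \<alpha>, \<beta>, \<gamma> and 1.\<close>

lemma prm_eq_0_iff: "prm t = 0 \<longleftrightarrow> t = 0 \<or> t = 1"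
  by (auto simp: prm_def)

lemma prm_less_prm_iff: "0 < s \<Longrightarrow> 0 < t \<Longrightarrow> prm s < prm t \<longleftrightarrow> s < t"
  by (auto simp: prm_def field_simps)

lemma prm_less_iff: "0 < t \<Longrightarrow> c < 1 \<Longrightarrow> prm t < c \<longleftrightarrow> t < 1 / (1 - c)"
  by (auto simp: prm_def field_simps)

lemma less_prm_iff: "0 < t \<Longrightarrow> c < 1 \<Longrightarrow> c < prm t \<longleftrightarrow> 1 / (1 - c) < t"
  by (auto simp: prm_def field_simps)

lemma prm_less_one: "0 < t \<Longrightarrow> prm t < 1"
  by (simp add: prm_def)

lemma inverse_prm: "inverse (prm t) = t / (t - 1)"
  by (simp add: prm_def)

lemma divide_in_unit_interval_iff:
  fixes a b :: "'a :: linordered_field"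
  shows "0 < a / b \<and> a / b < 1 \<longleftrightarrow> (0 < a \<and> a < b) \<or> (b < a \<and> a < 0)"
  by (cases rule: linorder_cases[of b 0]) (auto simp: field_simps zero_less_divide_iff)

lemma reciprocal_sum_cases:
  fixes x y z :: real
  assumes sum: "inverse x = inverse y + inverse z"
    and "x \<noteq> 0" "x < 1" "y \<noteq> 0" "z \<noteq> 0" "-1 < z" "z < y" "y < 1"
  shows "(0 < z \<and> 0 < x \<and> x < z \<and> x < 1/2)
       \<or> (y < 0 \<and> x < 0 \<and> y < x \<and> -1/2 < x)
       \<or> (z < 0 \<and> 0 < y \<and> 0 < x \<and> y < x \<and> y < 1/2)
       \<or> (z < 0 \<and> 0 < y \<and> x < 0 \<and> x < z)"
proof -
  have inverse_lt: "inverse t < -1" if "t < 0" "-1 < t" for t :: real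
    using one_less_inverse[of "-t"] that by simp
  consider "0 < z" "0 < y" | "y < 0" "z < 0" | "z < 0" "0 < y" "0 < x" | "z < 0" "0 < y" "x < 0"
    using assms by linarith
  then show ?thesis
  proof cases
    case 1
    then have "2 < inverse x" using sum one_less_inverse[of y] one_less_inverse[of z] assms by linarith
    then have "0 < x" by (metis inverse_positive_iff_positive less_trans zero_less_numeral)
    moreover from \<open>2 < inverse x\<close> have "x < 1/2" using \<open>0 < x\<close> by (simp add: field_simps)
    moreover have "inverse z < inverse x" using sum 1 by simp
    ultimately show ?thesis using 1 by simp
  next
    case 2
    then have "inverse x < -2" using sum inverse_lt[of y] inverse_lt[of z] assms by linarith
    then have "x < 0" by (metis inverse_negative_iff_negative less_trans neg_numeral_less_zero)
    moreover from \<open>inverse x < -2\<close> have "-1/2 < x" using \<open>x < 0\<close> by (simp add: field_simps)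
    moreover have "inverse x < inverse y" using sum 2 by simp
    ultimately show ?thesis using 2 by simp
  next
    case 3
    then have "2 < inverse y" using sum one_less_inverse[of x] inverse_lt[of z] assms by linarith
    then have "y < 1/2" using 3 by (simp add: field_simps)
    moreover have "inverse x < inverse y" using sum 3 by simp
    ultimately show ?thesis using 3 by simp
  next
    case 4
    then have "inverse z < inverse x" using sum by simp
    then show ?thesis using 4 by simp
  qed
qed

lemma conjugate_exponent_cases:
  fixes \<alpha> \<beta> \<gamma> :: real
  assumes "0 < \<alpha>" "1/2 < \<beta>" "1/2 < \<gamma>" "\<alpha> \<noteq> 1" "\<beta> \<noteq> 1" "\<gamma> \<noteq> 1"
    and "\<alpha> / (\<alpha> - 1) = \<beta> / (\<beta> - 1) + \<gamma> / (\<gamma> - 1)" "\<gamma> < \<beta>"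
  shows "(1 < \<gamma> \<and> 1 < \<alpha> \<and> \<alpha> < \<gamma> \<and> \<alpha> < 2)
       \<or> (\<beta> < 1 \<and> \<alpha> < 1 \<and> \<beta> < \<alpha> \<and> 2/3 < \<alpha>)
       \<or> (\<gamma> < 1 \<and> 1 < \<beta> \<and> 1 < \<alpha> \<and> \<beta> < \<alpha> \<and> \<beta> < 2)
       \<or> (\<gamma> < 1 \<and> 1 < \<beta> \<and> \<alpha> < 1 \<and> \<alpha> < \<gamma>)"
proof -
  have "0 < \<beta>" "0 < \<gamma>" using assms by auto
  moreover have "inverse (prm \<alpha>) = inverse (prm \<beta>) + inverse (prm \<gamma>)"
    using assms(7) by (simp add: inverse_prm)
  ultimately show ?thesis
    using reciprocal_sum_cases[of "prm \<alpha>" "prm \<beta>" "prm \<gamma>"] assms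
    \<comment> \<open>the thresholds are instantiated and simplified so that they match the simp normal
      forms such as \<open>prm \<alpha> * 2 < 1\<close>, and never fire on \<open>prm \<gamma> < prm \<beta>\<close>\<close>
    by (simp add: prm_eq_0_iff prm_less_one prm_less_prm_iff
        less_prm_iff[of _ 0, simplified] less_prm_iff[of _ "-1", simplified]
        less_prm_iff[of _ "-1/2", simplified]
        prm_less_iff[of _ 0, simplified] prm_less_iff[of _ "1/2", simplified])
qed

lemma prm_ratio_in_unit_interval_iff:
  assumes "0 < s" "0 < t"
  shows "0 < prm s / prm t \<and> prm s / prm t < 1 \<longleftrightarrow> (1 < s \<and> s < t) \<or> (t < s \<and> s < 1)"
  unfolding divide_in_unit_interval_iff using assms
  by (simp add: prm_less_prm_iff less_prm_iff[of _ 0, simplified] prm_less_iff[of _ 0, simplified])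

theorem lemma7:
  fixes \<alpha> \<beta> \<gamma> :: real
  assumes "\<alpha> > 0" and "\<beta> > 1/2" and "\<gamma> > 1/2"
    and "\<alpha> \<noteq> 1" and "\<beta> \<noteq> 1" and "\<gamma> \<noteq> 1"
    and "\<alpha> / (\<alpha> - 1) = \<beta> / (\<beta> - 1) + \<gamma> / (\<gamma> - 1)"
    and "\<beta> > \<gamma>"
  defines "Case1 \<equiv> \<alpha> > 1 \<and> \<beta> > 1 \<and> \<gamma> > 1 \<and> \<alpha> < \<gamma> \<and> \<gamma> < \<beta>
                    \<and> \<alpha> \<in> {1<..<2} \<and> \<beta> \<in> {1<..} \<and> \<gamma> \<in> {1<..}"
    and "Case2 \<equiv> \<alpha> < 1 \<and> \<beta> < 1 \<and> \<gamma> < 1 \<and> \<gamma> < \<beta> \<and> \<beta> < \<alpha>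
                    \<and> \<alpha> \<in> {2/3..<1} \<and> \<beta> \<in> {1/2..<1} \<and> \<gamma> \<in> {1/2..<1}"
    and "Case3 \<equiv> \<alpha> > 1 \<and> \<beta> > 1 \<and> \<gamma> < 1 \<and> \<gamma> < \<beta> \<and> \<beta> < \<alpha>
                    \<and> \<gamma> \<in> {1/2..<1} \<and> \<beta> \<in> {1<..<2} \<and> \<alpha> \<in> {1<..}"
    and "Case4 \<equiv> \<alpha> < 1 \<and> \<gamma> < 1 \<and> \<beta> > 1 \<and> \<alpha> < \<gamma> \<and> \<gamma> < \<beta>
                    \<and> \<alpha> \<in> {0<..<1} \<and> \<gamma> \<in> {1/2..<1} \<and> \<beta> \<in> {1<..}"
  shows "(0 < prm \<alpha> / prm \<beta> \<and> prm \<alpha> / prm \<beta> < 1 \<longrightarrow> Case1 \<or> Case2)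
       \<and> (0 < prm \<beta> / prm \<alpha> \<and> prm \<beta> / prm \<alpha> < 1 \<longrightarrow> Case3)
       \<and> (0 < prm \<gamma> / prm \<alpha> \<and> prm \<gamma> / prm \<alpha> < 1 \<longrightarrow> Case4)
       \<and> (Case1 \<or> Case2 \<or> Case3 \<or> Case4)"
proof -
  have "0 < \<beta>" "0 < \<gamma>" using assms by auto
  then have ratios:
      "0 < prm \<alpha> / prm \<beta> \<and> prm \<alpha> / prm \<beta> < 1 \<longleftrightarrow> (1 < \<alpha> \<and> \<alpha> < \<beta>) \<or> (\<beta> < \<alpha> \<and> \<alpha> < 1)"
      "0 < prm \<beta> / prm \<alpha> \<and> prm \<beta> / prm \<alpha> < 1 \<longleftrightarrow> (1 < \<beta> \<and> \<beta> < \<alpha>) \<or> (\<alpha> < \<beta> \<and> \<beta> < 1)"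
      "0 < prm \<gamma> / prm \<alpha> \<and> prm \<gamma> / prm \<alpha> < 1 \<longleftrightarrow> (1 < \<gamma> \<and> \<gamma> < \<alpha>) \<or> (\<alpha> < \<gamma> \<and> \<gamma> < 1)"
    using \<open>0 < \<alpha>\<close> by (simp_all add: prm_ratio_in_unit_interval_iff)
  from conjugate_exponent_cases[OF assms(1-8)] show ?thesis
    unfolding ratios Case1_def Case2_def Case3_def Case4_def using assms(1-3,8)
    by (elim disjE) auto
qed

end
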